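(* Let $G$ be a Polish group and let $H\colon G \to [0,\infty]$ be a graded subgroup which is Baire measurable and not meagre. Then $H$ is upper semi-continuous, and in fact continuous.
   Context: A graded subgroup of $G$ is a function $H\colon G \to [0,\infty]$ such that $H(1_G) = 0$, $H(x) = H(x^{-1})$ for all $x$, and $H(hg) \leq H(h) + H(g)$ for all $g,h\in G$. $H$ is called meagre if there is $r > 0$ such that $\{x \colon H(x) < r\}$ is meagre in $G$. $[0,\infty]$ carries the order topology. *)

theory Defs
  imports "HOL-Analysis.Analysis"
begin

(* Groups are written additively via the type class group_add, which does NOT
   assume commutativity: x + y is the group product, -x the inverse, 0 the identity. *)

definition nowhere_dense :: "'a::topological_space set \<Rightarrow> bool" where
  "nowhere_dense A \<longleftrightarrow> interior (closure A) = {}"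

definition meagre :: "'a::topological_space set \<Rightarrow> bool" where
  "meagre A \<longleftrightarrow> (\<exists>F. countable F \<and> (\<forall>N\<in>F. nowhere_dense N) \<and> A \<subseteq> \<Union>F)"

definition baire_property :: "'a::topological_space set \<Rightarrow> bool" where
  "baire_property A \<longleftrightarrow> (\<exists>U. open U \<and> meagre ((A - U) \<union> (U - A)))"

definition baire_measurable :: "('a::topological_space \<Rightarrow> 'b::topological_space) \<Rightarrow> bool" where
  "baire_measurable f \<longleftrightarrow> (\<forall>V. open V \<longrightarrow> baire_property (f -` V))"

definition graded_subgroup :: "('a::group_add \<Rightarrow> ennreal) \<Rightarrow> bool" where
  "graded_subgroup H \<longleftrightarrow> H 0 = 0 \<and> (\<forall>x. H x = H (- x)) \<and> (\<forall>g h. H (h + g) \<le> H h + H g)"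

definition meagre_graded :: "('a::{group_add,topological_space} \<Rightarrow> ennreal) \<Rightarrow> bool" where
  "meagre_graded H \<longleftrightarrow> (\<exists>r>0. meagre {x. H x < r})"

definition upper_semicontinuous :: "('a::topological_space \<Rightarrow> 'b::linorder_topology) \<Rightarrow> bool" where
  "upper_semicontinuous f \<longleftrightarrow> (\<forall>x c. f x < c \<longrightarrow> eventually (\<lambda>y. f y < c) (nhds x))"

end

theory Submission
  imports Defs
begin

text \<open>By Pettis' theorem the non-meagre set \<open>{x. H x < r}\<close>, which has the Baire property,
  produces a neighbourhood of \<open>0\<close> consisting of differences \<open>a - b\<close> of its elements, and
  on such differences \<open>H < 2r\<close>. Hence \<open>H\<close> tends to \<open>0\<close> at \<open>0\<close>, and subadditivity together
  with symmetry transport this to continuity at every point.\<close>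

lemma meagre_subset: "meagre B \<Longrightarrow> A \<subseteq> B \<Longrightarrow> meagre A"
  unfolding meagre_def by (meson order.trans)

lemma meagre_Un: "meagre A \<Longrightarrow> meagre B \<Longrightarrow> meagre (A \<union> B)"
  unfolding meagre_def
proof (elim exE conjE)
  fix F G assume "countable F" "\<forall>N\<in>F. nowhere_dense N" "A \<subseteq> \<Union>F"
    "countable G" "\<forall>N\<in>G. nowhere_dense N" "B \<subseteq> \<Union>G"
  then show "\<exists>F. countable F \<and> (\<forall>N\<in>F. nowhere_dense N) \<and> A \<union> B \<subseteq> \<Union>F"
    by (intro exI[of _ "F \<union> G"]) auto
qed

lemma open_not_meagre:
  fixes W :: "'a::polish_space set"
  assumes "open W" "W \<noteq> {}"
  shows "\<not> meagre W"
proof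
  assume "meagre W"
  then obtain F where F: "countable F" "\<forall>N\<in>F. nowhere_dense N" "W \<subseteq> \<Union>F"
    unfolding meagre_def by blast
  have "euclidean interior_of \<Union>(closure ` F) = {}"
  proof (rule Baire_category_alt)
    show "completely_metrizable_space (euclidean :: 'a topology) \<or>
        locally_compact_space (euclidean :: 'a topology) \<and> regular_space (euclidean :: 'a topology)"
      using completely_metrizable_space_euclidean by blast
    show "countable (closure ` F)"
      using F(1) by simp
    show "closedin euclidean T \<and> euclidean interior_of T = {}" if "T \<in> closure ` F" for T
      using F(2) that by (auto simp: nowhere_dense_def)
  qed
  then have "interior (\<Union>(closure ` F)) = {}"
    by simp
  moreover have "W \<subseteq> interior (\<Union>(closure ` F))"
    using F(3) closure_subset by (intro interior_maximal assms(1)) blast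
  ultimately show False
    using assms(2) by blast
qed

lemma homeomorphic_map_translation:
  "homeomorphic_map euclidean euclidean (\<lambda>x::'a::topological_group_add. a + x)"
proof -
  have "continuous_on UNIV (\<lambda>x::'a. b + x)" for b
    by (intro continuous_on_add continuous_on_const continuous_on_id)
  then have "homeomorphic_maps euclidean euclidean (\<lambda>x. a + x) (\<lambda>x. - a + x)"
    by (simp add: homeomorphic_maps_def)
  then show ?thesis
    unfolding homeomorphic_map_maps by blast
qed

lemma nowhere_dense_homeomorphic_image:
  assumes "homeomorphic_map euclidean euclidean f" "nowhere_dense N"
  shows "nowhere_dense (f ` N)"
  using assms homeomorphic_map_closure_of[of euclidean euclidean f]
    homeomorphic_map_interior_of[of euclidean euclidean f]
  by (simp add: nowhere_dense_def)

lemma meagre_homeomorphic_image: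
  assumes f: "homeomorphic_map euclidean euclidean f" and "meagre M"
  shows "meagre (f ` M)"
proof -
  obtain F where F: "countable F" "\<forall>N\<in>F. nowhere_dense N" "M \<subseteq> \<Union>F"
    using \<open>meagre M\<close> unfolding meagre_def by blast
  have "countable ((`) f ` F)"
    using F(1) by simp
  moreover have "\<forall>N\<in>(`) f ` F. nowhere_dense N"
    using F(2) nowhere_dense_homeomorphic_image[OF f] by blast
  moreover have "f ` M \<subseteq> \<Union>((`) f ` F)"
    using F(3) by blast
  ultimately show ?thesis
    unfolding meagre_def by blast
qed

lemma Pettis_zero_in_interior_differences:
  fixes A :: "'a::{polish_space, topological_group_add} set"
  assumes "baire_property A" "\<not> meagre A"
  shows "0 \<in> interior {a + - b |a b. a \<in> A \<and> b \<in> A}"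
proof -
  obtain U where "open U" and meagre_M: "meagre ((A - U) \<union> (U - A))"
    using assms(1) unfolding baire_property_def by blast
  define M where "M = (A - U) \<union> (U - A)"
  have "U \<noteq> {}"
  proof
    assume "U = {}"
    then show False
      using assms(2) meagre_M by simp
  qed
  then obtain u where "u \<in> U"
    by blast
  define N where "N = (\<lambda>w. w + u) -` U"
  have "continuous_on UNIV (\<lambda>w. w + u)"
    by (intro continuous_on_add continuous_on_id continuous_on_const)
  then have "open N"
    unfolding N_def by (rule open_vimage[OF \<open>open U\<close>])
  moreover have "0 \<in> N"
    using \<open>u \<in> U\<close> by (simp add: N_def)
  moreover have "N \<subseteq> {a + - b |a b. a \<in> A \<and> b \<in> A}"
  proof
    fix w assume "w \<in> N"
    define W where "W = U \<inter> (\<lambda>x. w + x) ` U"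
    have "open ((\<lambda>x. w + x) ` U)"
      using homeomorphic_imp_open_map[OF homeomorphic_map_translation] \<open>open U\<close>
      by (metis open_map_def open_openin)
    then have "open W"
      unfolding W_def using \<open>open U\<close> by (intro open_Int)
    moreover have "w + u \<in> W"
      using \<open>w \<in> N\<close> \<open>u \<in> U\<close> unfolding W_def N_def by auto
    ultimately have "\<not> meagre W"
      using open_not_meagre by blast
    moreover have "meagre (M \<union> (\<lambda>x. w + x) ` M)"
      unfolding M_def
      by (intro meagre_Un meagre_M meagre_homeomorphic_image[OF homeomorphic_map_translation])
    ultimately have "\<not> W \<subseteq> M \<union> (\<lambda>x. w + x) ` M"
      by (metis meagre_subset)
    then obtain z where z: "z \<in> W" "z \<notin> M" "z \<notin> (\<lambda>x. w + x) ` M"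
      by blast
    then obtain z' where "z' \<in> U" "z = w + z'"
      by (auto simp: W_def)
    then have "z \<in> A" "z' \<in> A"
      using z by (auto simp: W_def M_def)
    moreover have "w = z + - z'"
      using \<open>z = w + z'\<close> by (simp add: add.assoc)
    ultimately show "w \<in> {a + - b |a b. a \<in> A \<and> b \<in> A}"
      by blast
  qed
  ultimately have "N \<subseteq> interior {a + - b |a b. a \<in> A \<and> b \<in> A}"
    by (intro interior_maximal)
  with \<open>0 \<in> N\<close> show ?thesis
    by blast
qed

lemma graded_subgroup_add_le: "graded_subgroup H \<Longrightarrow> H (x + y) \<le> H x + H y"
  unfolding graded_subgroup_def by blast

lemma graded_subgroup_minus: "graded_subgroup H \<Longrightarrow> H (- x) = H x"
  unfolding graded_subgroup_def by metis

lemma graded_subgroup_diff_less: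
  assumes "graded_subgroup H" "H a < r" "H b < r"
  shows "H (a + - b) < r + r"
proof -
  have "H (a + - b) \<le> H a + H b"
    using graded_subgroup_add_le[OF assms(1)] graded_subgroup_minus[OF assms(1)] by metis
  also have "\<dots> < r + r"
    using assms(2,3) by (rule add_strict_mono)
  finally show ?thesis .
qed

lemma graded_subgroup_tendsto_zero:
  fixes H :: "'a::{polish_space, topological_group_add} \<Rightarrow> ennreal"
  assumes "graded_subgroup H" "baire_measurable H" "\<not> meagre_graded H"
  shows "(H \<longlongrightarrow> 0) (nhds 0)"
proof (rule order_tendstoI)
  fix c :: ennreal assume "0 < c"
  define r where "r = c / 2"
  have "r > 0"
    using \<open>0 < c\<close> by (simp add: r_def ennreal_zero_less_divide)
  have "r + r = c * 2 / 2"
    by (simp add: r_def mult_2_right flip: add_divide_distrib_ennreal)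
  also have "\<dots> = c"
    by (rule ennreal_mult_divide_eq) simp_all
  finally have "r + r = c" .
  define A where "A = {x. H x < r}"
  define D where "D = {a + - b |a b. a \<in> A \<and> b \<in> A}"
  have "H -` {..<r} = A"
    by (auto simp: A_def)
  then have "baire_property A"
    using assms(2) unfolding baire_measurable_def by (metis open_lessThan)
  moreover have "\<not> meagre A"
    using assms(3) \<open>r > 0\<close> unfolding meagre_graded_def A_def by blast
  ultimately have "0 \<in> interior D"
    unfolding D_def by (rule Pettis_zero_in_interior_differences)
  then have "eventually (\<lambda>x. x \<in> interior D) (nhds 0)"
    by (intro eventually_nhds_in_open open_interior)
  moreover have "H x < c" if "x \<in> interior D" for x
    using interior_subset[of D] that graded_subgroup_diff_less[OF assms(1)] \<open>r + r = c\<close>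
    by (auto simp: D_def A_def)
  ultimately show "eventually (\<lambda>x. H x < c) (nhds 0)"
    by (rule eventually_mono)
qed simp

lemma graded_subgroup_tendsto:
  fixes H :: "'a::topological_group_add \<Rightarrow> ennreal"
  assumes H: "graded_subgroup H" and "(H \<longlongrightarrow> 0) (nhds 0)"
  shows "(H \<longlongrightarrow> H x) (nhds x)"
proof -
  define d where "d y = H (y + - x)" for y
  have "((\<lambda>y. y + - x) \<longlongrightarrow> x + - x) (nhds x)"
    by (intro tendsto_add filterlim_ident tendsto_const)
  then have "((\<lambda>y. y + - x) \<longlongrightarrow> 0) (nhds x)"
    by simp
  then have "(d \<longlongrightarrow> 0) (nhds x)"
    unfolding d_def using assms(2) by (rule filterlim_compose[rotated])
  then have shifted: "((\<lambda>y. a + d y) \<longlongrightarrow> a) (nhds x)" for a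
    using tendsto_add[OF tendsto_const, of d 0 "nhds x" a] by simp
  have above: "H y \<le> H x + d y" for y
    using graded_subgroup_add_le[OF H, of "y + - x" x] by (simp add: d_def add.assoc add.commute)
  have below: "H x \<le> H y + d y" for y
  proof -
    have "H x \<le> H (x + - y) + H y"
      using graded_subgroup_add_le[OF H, of "x + - y" y] by (simp add: add.assoc)
    also have "H (x + - y) = d y"
      using graded_subgroup_minus[OF H, of "y + - x"] by (simp add: d_def minus_add)
    finally show ?thesis
      by (simp add: add.commute)
  qed
  show ?thesis
  proof (rule order_tendstoI)
    fix c assume "H x < c"
    with order_tendstoD(2)[OF shifted] have "eventually (\<lambda>y. H x + d y < c) (nhds x)" .
    then show "eventually (\<lambda>y. H y < c) (nhds x)"
      by (rule eventually_mono) (use above order.strict_trans1 in blast)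
  next
    fix c assume "c < H x"
    with order_tendstoD(2)[OF shifted] have "eventually (\<lambda>y. c + d y < H x) (nhds x)" .
    then show "eventually (\<lambda>y. c < H y) (nhds x)"
    proof (rule eventually_mono)
      fix y assume "c + d y < H x"
      show "c < H y"
      proof (rule ccontr)
        assume "\<not> c < H y"
        then have "H y + d y \<le> c + d y"
          by (simp add: add_right_mono)
        then have "H x \<le> c + d y"
          using below[of y] by (rule order_trans[rotated])
        then show False
          using \<open>c + d y < H x\<close> by simp
      qed
    qed
  qed
qed

lemma upper_semicontinuous_if_tendsto:
  "(\<And>x. (f \<longlongrightarrow> f x) (nhds x)) \<Longrightarrow> upper_semicontinuous f"
  unfolding upper_semicontinuous_def using order_tendstoD(2) by blast

theorem lemma3p11:
  fixes H :: "'a::{polish_space, topological_group_add} \<Rightarrow> ennreal"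
  assumes "graded_subgroup H"
    and "baire_measurable H"
    and "\<not> meagre_graded H"
  shows "upper_semicontinuous H \<and> continuous_on UNIV H"
proof -
  have "(H \<longlongrightarrow> 0) (nhds 0)"
    using assms by (rule graded_subgroup_tendsto_zero)
  then have "(H \<longlongrightarrow> H x) (nhds x)" for x
    using assms(1) graded_subgroup_tendsto by blast
  then show ?thesis
    by (simp add: upper_semicontinuous_if_tendsto continuous_on_eq_continuous_at isCont_def
        tendsto_at_iff_tendsto_nhds)
qed

end
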